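(* Let $n\ge2$ and $G=\mathbb{R}^n\setminus\overline{\mathbb{B}^n}$, where $\mathbb{B}^n$ is the open unit ball. Then $G$ is uniform and \[ \frac{\pi}{\log3}\le A_G\le\frac{4\pi}{\log3}. \]
   Context: For a domain $G\subsetneq\mathbb{R}^n$ let $d_G(x)=d(x,\partial G)$; $k_G(x,y)=\inf_\gamma\int_\gamma\frac{|dx|}{d_G(x)}$ over rectifiable curves $\gamma\subset G$ joining $x,y$ (quasihyperbolic distance); $j_G(x,y)=\log\left(1+\frac{|x-y|}{\min\{d_G(x),d_G(y)\}}\right)$; the uniformity constant is $A_G=\inf\{A\ge1: k_G\le A\,j_G\text{ on }G\times G\}$ (with $\inf\emptyset=+\infty$), and $G$ is uniform if $A_G<\infty$. *)

theory Defs
  imports "HOL-Analysis.Analysis"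
begin

definition bdist :: "'a::euclidean_space set \<Rightarrow> 'a \<Rightarrow> real" where
  "bdist G x = infdist x (frontier G)"

definition partitions01 :: "(nat \<times> (nat \<Rightarrow> real)) set" where
  "partitions01 = {(m, t). t 0 = 0 \<and> t m = 1 \<and> (\<forall>i<m. t i < t (Suc i))}"

definition curve_length :: "(real \<Rightarrow> 'a::euclidean_space) \<Rightarrow> ereal" where
  "curve_length \<gamma> = (SUP p\<in>partitions01.
      ereal (\<Sum>i<fst p. dist (\<gamma> (snd p (Suc i))) (\<gamma> (snd p i))))"

definition rectifiable_curve :: "(real \<Rightarrow> 'a::euclidean_space) \<Rightarrow> bool" where
  "rectifiable_curve \<gamma> \<longleftrightarrow> path \<gamma> \<and> curve_length \<gamma> < \<infinity>"

text \<open>Quasihyperbolic length: the line integral of 1/d_G with respect to arc length,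
  realised as the supremum of lower Riemann--Stieltjes sums.\<close>
definition qh_length :: "'a::euclidean_space set \<Rightarrow> (real \<Rightarrow> 'a) \<Rightarrow> ereal" where
  "qh_length G \<gamma> = (SUP p\<in>partitions01.
      ereal (\<Sum>i<fst p. dist (\<gamma> (snd p (Suc i))) (\<gamma> (snd p i)) *
        (INF s\<in>{snd p i..snd p (Suc i)}. 1 / bdist G (\<gamma> s))))"

definition qh_dist :: "'a::euclidean_space set \<Rightarrow> 'a \<Rightarrow> 'a \<Rightarrow> ereal" where
  "qh_dist G x y = (INF \<gamma>\<in>{\<gamma>. rectifiable_curve \<gamma> \<and> path_image \<gamma> \<subseteq> G \<and>
      pathstart \<gamma> = x \<and> pathfinish \<gamma> = y}. qh_length G \<gamma>)"

definition j_dist :: "'a::euclidean_space set \<Rightarrow> 'a \<Rightarrow> 'a \<Rightarrow> real" where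
  "j_dist G x y = ln (1 + dist x y / min (bdist G x) (bdist G y))"

text \<open>Uniformity constant A_G (infimum of the empty set is +infinity).\<close>
definition uniformity_const :: "'a::euclidean_space set \<Rightarrow> ereal" where
  "uniformity_const G = Inf (ereal ` {A::real. A \<ge> 1 \<and>
      (\<forall>x\<in>G. \<forall>y\<in>G. qh_dist G x y \<le> ereal (A * j_dist G x y))})"

definition uniform_domain :: "'a::euclidean_space set \<Rightarrow> bool" where
  "uniform_domain G \<longleftrightarrow> uniformity_const G < \<infinity>"

end

theory Submission
  imports Defs
begin

text \<open>
  Upper bound: join x and y by a radial segment out to a sphere of radius \<rho>, an arc of a great
  circle on that sphere, and a radial segment back in. Taking \<rho> = min(|x|,|y|) when
  |x - y| \<le> 2 d(x,y) and \<rho> = max(|x|,|y|) + |x - y| otherwise bounds the quasihyperbolic length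
  of this path by (4\<pi>/log 3) j(x,y).

  Lower bound: along any path from r e to -r e the angle to e grows from 0 to \<pi>, and on short
  pieces the quasihyperbolic length dominates the angular increment, so k(re, -re) \<ge> \<pi>, while
  j(re, -re) = log(1 + 2r/(r - 1)) tends to log 3 as r \<rightarrow> \<infinity>.
\<close>

lemma bdist_exterior_ball:
  fixes z :: "'a::euclidean_space"
  assumes "1 \<le> norm z"
  shows "bdist (- cball 0 1) z = norm z - 1"
proof -
  have z0: "z \<noteq> 0" using assms by auto
  have "infdist z (sphere 0 1) \<le> dist z (sgn z)"
    by (rule infdist_le) (simp add: z0 norm_sgn)
  also have "dist z (sgn z) = norm z - 1"
  proof -
    have "z - sgn z = (1 - 1 / norm z) *\<^sub>R z"
      by (simp add: sgn_div_norm algebra_simps divide_inverse)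
    then have "dist z (sgn z) = \<bar>1 - 1 / norm z\<bar> * norm z" by (simp add: dist_norm)
    also have "\<dots> = norm z - 1" using assms z0 by (simp add: abs_if field_simps)
    finally show ?thesis .
  qed
  finally have le: "infdist z (sphere 0 1) \<le> norm z - 1" .
  have ne: "sphere (0::'a) 1 \<noteq> {}" by simp
  have "norm z - 1 \<le> infdist z (sphere 0 1)"
    unfolding infdist_notempty[OF ne]
  proof (rule cINF_greatest)
    fix p :: 'a assume "p \<in> sphere 0 1"
    then show "norm z - 1 \<le> dist z p" using norm_triangle_ineq2[of z p] by (simp add: dist_norm)
  qed simp
  with le show ?thesis unfolding bdist_def by simp
qed

lemma inverse_bdist_nonneg: "0 \<le> 1 / bdist G z"
  by (simp add: bdist_def infdist_nonneg)

subsection \<open>Majorants for weighted lengths\<close>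

text \<open>
  Both lengths in the definitions are suprema of sums of weighted chords over partitions of
  [0,1], with weight 1 for the Euclidean and 1/d_G for the quasihyperbolic length. A function F
  whose increments dominate all weighted chords bounds such a sum by F 1 - F 0, and majorants
  concatenate along joined paths.
\<close>

definition weighted_chord ::
    "('a::euclidean_space \<Rightarrow> real) \<Rightarrow> (real \<Rightarrow> 'a) \<Rightarrow> real \<Rightarrow> real \<Rightarrow> real" where
  "weighted_chord w g a b = dist (g b) (g a) * (INF s\<in>{a..b}. w (g s))"

definition length_majorant ::
    "('a::euclidean_space \<Rightarrow> real) \<Rightarrow> (real \<Rightarrow> 'a) \<Rightarrow> (real \<Rightarrow> real) \<Rightarrow> bool" where
  "length_majorant w g F \<longleftrightarrow>
     (\<forall>a b. 0 \<le> a \<longrightarrow> a \<le> b \<longrightarrow> b \<le> 1 \<longrightarrow> weighted_chord w g a b \<le> F b - F a)"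

definition weighted_length_le ::
    "('a::euclidean_space \<Rightarrow> real) \<Rightarrow> (real \<Rightarrow> 'a) \<Rightarrow> real \<Rightarrow> bool" where
  "weighted_length_le w g V \<longleftrightarrow> (\<exists>F. length_majorant w g F \<and> F 1 - F 0 = V)"

lemma partitions01_mono:
  assumes "(m, t) \<in> partitions01" "i \<le> j" "j \<le> m"
  shows "t i \<le> t j"
  using assms(2,3)
proof (induction j)
  case (Suc j)
  show ?case
  proof (cases "i = Suc j")
    case False
    then have "t i \<le> t j" using Suc by simp
    also have "t j < t (Suc j)" using assms(1) Suc.prems by (simp add: partitions01_def)
    finally show ?thesis by simp
  qed simp
qed simp

lemma partitions01_in_unit:
  assumes "(m, t) \<in> partitions01" "i \<le> m"
  shows "0 \<le> t i" "t i \<le> 1"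
  using partitions01_mono[OF assms(1) _ assms(2), of 0] partitions01_mono[OF assms(1) assms(2) order_refl]
    assms(1) by (auto simp: partitions01_def)

lemma sum_weighted_chords_le:
  assumes "length_majorant w g F" "(m, t) \<in> partitions01"
  shows "(\<Sum>i<m. weighted_chord w g (t i) (t (Suc i))) \<le> F 1 - F 0"
proof -
  have "(\<Sum>i<m. weighted_chord w g (t i) (t (Suc i))) \<le> (\<Sum>i<m. F (t (Suc i)) - F (t i))"
  proof (rule sum_mono)
    fix i assume "i \<in> {..<m}"
    then show "weighted_chord w g (t i) (t (Suc i)) \<le> F (t (Suc i)) - F (t i)"
      using assms partitions01_in_unit[OF assms(2), of i] partitions01_in_unit[OF assms(2), of "Suc i"]
      unfolding length_majorant_def partitions01_def by auto
  qed
  also have "\<dots> = F (t m) - F (t 0)" by (rule sum_lessThan_telescope)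
  also have "\<dots> = F 1 - F 0" using assms(2) by (simp add: partitions01_def)
  finally show ?thesis .
qed

lemma qh_length_le:
  assumes "weighted_length_le (\<lambda>z. 1 / bdist G z) g V"
  shows "qh_length G g \<le> ereal V"
proof -
  obtain F where F: "length_majorant (\<lambda>z. 1 / bdist G z) g F" "F 1 - F 0 = V"
    using assms weighted_length_le_def by blast
  show ?thesis unfolding qh_length_def
  proof (rule SUP_least)
    fix p assume p: "p \<in> partitions01"
    obtain m t where mt: "p = (m, t)" by fastforce
    show "ereal (\<Sum>i<fst p. dist (g (snd p (Suc i))) (g (snd p i)) *
        (INF s\<in>{snd p i..snd p (Suc i)}. 1 / bdist G (g s))) \<le> ereal V"
      using sum_weighted_chords_le[OF F(1), of m t] p F(2) by (simp add: mt weighted_chord_def)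
  qed
qed

lemma curve_length_le:
  assumes "weighted_length_le (\<lambda>z. 1) g V"
  shows "curve_length g \<le> ereal V"
proof -
  obtain F where F: "length_majorant (\<lambda>z. 1) g F" "F 1 - F 0 = V"
    using assms weighted_length_le_def by blast
  show ?thesis unfolding curve_length_def
  proof (rule SUP_least)
    fix p assume p: "p \<in> partitions01"
    obtain m t where mt: "p = (m, t)" by fastforce
    have "(\<Sum>i<m. dist (g (t (Suc i))) (g (t i))) = (\<Sum>i<m. weighted_chord (\<lambda>z. 1) g (t i) (t (Suc i)))"
      using p by (intro sum.cong) (auto simp: mt weighted_chord_def partitions01_def less_imp_le)
    then show "ereal (\<Sum>i<fst p. dist (g (snd p (Suc i))) (g (snd p i))) \<le> ereal V"
      using sum_weighted_chords_le[OF F(1), of m t] p F(2) by (simp add: mt)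
  qed
qed

lemma INF_weight_nonneg:
  fixes w :: "'a \<Rightarrow> real" and a b :: real
  assumes "\<And>z. 0 \<le> w z" "a \<le> b"
  shows "0 \<le> (INF s\<in>{a..b}. w (g s))"
  using assms by (intro cINF_greatest) auto

lemma INF_weight_le:
  fixes w :: "'a \<Rightarrow> real" and a b :: real
  assumes "\<And>z. 0 \<le> w z" "s \<in> {a..b}"
  shows "(INF s\<in>{a..b}. w (g s)) \<le> w (g s)"
  using assms by (intro cINF_lower bdd_belowI[of _ 0]) auto

lemma INF_weight_mono:
  fixes w :: "'a \<Rightarrow> real" and a b c d :: real
  assumes "\<And>z. 0 \<le> w z" "c \<le> d"
    and "\<And>s'. s' \<in> {c..d} \<Longrightarrow> \<exists>s\<in>{a..b}. g s = h s'"
  shows "(INF s\<in>{a..b}. w (g s)) \<le> (INF s\<in>{c..d}. w (h s))"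
proof (rule cINF_mono)
  show "bdd_below ((\<lambda>s. w (g s)) ` {a..b})" using assms(1) by (intro bdd_belowI[of _ 0]) auto
  fix s' assume "s' \<in> {c..d}"
  then obtain s where "s \<in> {a..b}" "g s = h s'" using assms(3) by blast
  then show "\<exists>s\<in>{a..b}. w (g s) \<le> w (h s')" by force
qed (use assms(2) in simp)

lemma weighted_chord_le_reparam:
  assumes "\<And>z. 0 \<le> w z" "c \<le> d" "g a = h c" "g b = h d"
    and "\<And>s'. s' \<in> {c..d} \<Longrightarrow> \<exists>s\<in>{a..b}. g s = h s'"
  shows "weighted_chord w g a b \<le> weighted_chord w h c d"
  unfolding weighted_chord_def assms(3,4)
  by (intro mult_left_mono INF_weight_mono[OF assms(1,2,5)]) auto

lemma weighted_chord_join_across: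
  assumes w: "\<And>z. 0 \<le> w z" and e: "g1 1 = g2 0" and ab: "a \<le> 1/2" "1/2 < b"
  shows "weighted_chord w (g1 +++ g2) a b \<le> weighted_chord w g1 (2*a) 1 + weighted_chord w g2 0 (2*b - 1)"
proof -
  let ?g = "g1 +++ g2"
  let ?I = "INF s\<in>{a..b}. w (?g s)"
  have I1: "?I \<le> (INF s\<in>{2*a..1}. w (g1 s))"
  proof (rule INF_weight_mono[OF w])
    fix s' assume "s' \<in> {2*a..1}"
    then show "\<exists>s\<in>{a..b}. ?g s = g1 s'"
      using ab by (intro bexI[of _ "s'/2"]) (auto simp: joinpaths_def)
  qed (use ab in auto)
  have I2: "?I \<le> (INF s\<in>{0..2*b - 1}. w (g2 s))"
  proof (rule INF_weight_mono[OF w])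
    fix s' assume s': "s' \<in> {0..2*b - 1}"
    show "\<exists>s\<in>{a..b}. ?g s = g2 s'"
    proof (cases "s' = 0")
      case True
      then show ?thesis using ab e by (intro bexI[of _ "1/2"]) (auto simp: joinpaths_def)
    next
      case False
      then show ?thesis
        using ab s' by (intro bexI[of _ "(s' + 1)/2"]) (auto simp: joinpaths_def add_divide_distrib)
    qed
  qed (use ab in auto)
  have "weighted_chord w ?g a b \<le> (dist (g2 (2*b - 1)) (g2 0) + dist (g1 1) (g1 (2*a))) * ?I"
    unfolding weighted_chord_def using ab
    by (intro mult_right_mono INF_weight_nonneg[OF w])
       (auto simp: joinpaths_def e intro: dist_triangle)
  also have "\<dots> \<le> weighted_chord w g2 0 (2*b - 1) + weighted_chord w g1 (2*a) 1"
    unfolding weighted_chord_def distrib_right by (intro add_mono mult_left_mono I1 I2) auto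
  finally show ?thesis by simp
qed

lemma length_majorant_join:
  assumes w: "\<And>z. 0 \<le> w z" and F1: "length_majorant w g1 F1" and F2: "length_majorant w g2 F2"
    and e: "g1 1 = g2 0"
  shows "length_majorant w (g1 +++ g2)
           (\<lambda>t. if t \<le> 1/2 then F1 (2*t) else F1 1 + F2 (2*t - 1) - F2 0)"
  unfolding length_majorant_def
proof (intro allI impI)
  fix a b :: real assume ab: "0 \<le> a" "a \<le> b" "b \<le> 1"
  let ?g = "g1 +++ g2"
  consider "b \<le> 1/2" | "1/2 < a" | "a \<le> 1/2" "1/2 < b" by linarith
  then show "weighted_chord w ?g a b \<le>
      (if b \<le> 1/2 then F1 (2*b) else F1 1 + F2 (2*b - 1) - F2 0) -
      (if a \<le> 1/2 then F1 (2*a) else F1 1 + F2 (2*a - 1) - F2 0)"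
  proof cases
    case 1
    have "weighted_chord w ?g a b \<le> weighted_chord w g1 (2*a) (2*b)"
    proof (rule weighted_chord_le_reparam[OF w])
      fix s' assume "s' \<in> {2*a..2*b}"
      then show "\<exists>s\<in>{a..b}. ?g s = g1 s'"
        using 1 by (intro bexI[of _ "s'/2"]) (auto simp: joinpaths_def)
    qed (use 1 ab in \<open>auto simp: joinpaths_def\<close>)
    also have "\<dots> \<le> F1 (2*b) - F1 (2*a)" using F1 ab 1 unfolding length_majorant_def by auto
    finally show ?thesis using 1 ab by simp
  next
    case 2
    have "weighted_chord w ?g a b \<le> weighted_chord w g2 (2*a - 1) (2*b - 1)"
    proof (rule weighted_chord_le_reparam[OF w])
      fix s' assume "s' \<in> {2*a - 1..2*b - 1}"
      then show "\<exists>s\<in>{a..b}. ?g s = g2 s'"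
        using 2 by (intro bexI[of _ "(s' + 1)/2"]) (auto simp: joinpaths_def add_divide_distrib)
    qed (use 2 ab in \<open>auto simp: joinpaths_def\<close>)
    also have "\<dots> \<le> F2 (2*b - 1) - F2 (2*a - 1)" using F2 ab 2 unfolding length_majorant_def by auto
    finally show ?thesis using 2 ab by simp
  next
    case 3
    have "weighted_chord w ?g a b \<le> weighted_chord w g1 (2*a) 1 + weighted_chord w g2 0 (2*b - 1)"
      by (rule weighted_chord_join_across[of w g1 g2, OF w e 3])
    also have "\<dots> \<le> (F1 1 - F1 (2*a)) + (F2 (2*b - 1) - F2 0)"
      using F1 F2 ab 3 unfolding length_majorant_def by (intro add_mono) auto
    finally show ?thesis using 3 by simp
  qed
qed

lemma weighted_length_le_join:
  assumes "\<And>z. 0 \<le> w z" "weighted_length_le w g1 V1" "weighted_length_le w g2 V2"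
    and "g1 1 = g2 0"
  shows "weighted_length_le w (g1 +++ g2) (V1 + V2)"
proof -
  obtain F1 F2 where F1: "length_majorant w g1 F1" "F1 1 - F1 0 = V1"
    and F2: "length_majorant w g2 F2" "F2 1 - F2 0 = V2"
    using assms(2,3) weighted_length_le_def by blast
  show ?thesis unfolding weighted_length_le_def
    by (rule exI, rule conjI, rule length_majorant_join[OF assms(1) F1(1) F2(1) assms(4)])
       (use F1 F2 in simp)
qed

lemma weighted_length_le_lipschitz:
  assumes "\<And>a b. 0 \<le> a \<Longrightarrow> a \<le> b \<Longrightarrow> b \<le> 1 \<Longrightarrow> dist (g b) (g a) \<le> L * (b - a)"
  shows "weighted_length_le (\<lambda>z. 1) g L"
proof -
  have "length_majorant (\<lambda>z. 1) g (\<lambda>t. L * t)"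
    using assms by (auto simp: length_majorant_def weighted_chord_def algebra_simps)
  then show ?thesis unfolding weighted_length_le_def by (intro exI[of _ "\<lambda>t. L * t"]) simp
qed

subsection \<open>Radial segments and circular arcs\<close>

lemma ln_diff_ge_div:
  fixes p q :: real
  assumes "0 < p" "p \<le> q"
  shows "(q - p) / q \<le> ln q - ln p"
proof -
  have "ln (p / q) \<le> p / q - 1" using assms by (intro ln_le_minus_one) auto
  also have "\<dots> = - ((q - p) / q)" using assms by (simp add: field_simps)
  finally show ?thesis using assms by (simp add: ln_div)
qed

definition radial_segment :: "real \<Rightarrow> real \<Rightarrow> 'a::euclidean_space \<Rightarrow> real \<Rightarrow> 'a" where
  "radial_segment p q u = (\<lambda>t. (p + t * (q - p)) *\<^sub>R u)"

definition circle_arc :: "real \<Rightarrow> real \<Rightarrow> 'a::euclidean_space \<Rightarrow> 'a \<Rightarrow> real \<Rightarrow> 'a" where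
  "circle_arc R \<theta> u w = (\<lambda>t. R *\<^sub>R (cos (t * \<theta>) *\<^sub>R u + sin (t * \<theta>) *\<^sub>R w))"

lemma path_radial_segment: "path (radial_segment p q u)"
  unfolding path_def radial_segment_def by (intro continuous_intros)

lemma path_circle_arc: "path (circle_arc R \<theta> u w)"
  unfolding path_def circle_arc_def by (intro continuous_intros)

lemma convex_comb_between:
  fixes p q t :: real
  assumes "0 \<le> t" "t \<le> 1"
  shows "min p q \<le> p + t * (q - p)" "p + t * (q - p) \<le> max p q"
proof -
  have "p + t * (q - p) = (1 - t) * p + t * q" by (simp add: algebra_simps)
  moreover have "(1 - t) * min p q + t * min p q \<le> (1 - t) * p + t * q"
    using assms by (intro add_mono mult_left_mono) auto
  moreover have "(1 - t) * p + t * q \<le> (1 - t) * max p q + t * max p q"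
    using assms by (intro add_mono mult_left_mono) auto
  ultimately show "min p q \<le> p + t * (q - p)" "p + t * (q - p) \<le> max p q"
    by (simp_all add: algebra_simps)
qed

lemma norm_radial_segment:
  assumes "norm u = 1" "0 \<le> p" "0 \<le> q" "0 \<le> t" "t \<le> 1"
  shows "norm (radial_segment p q u t) = p + t * (q - p)"
  using convex_comb_between[OF assms(4,5), of p q] assms by (simp add: radial_segment_def)

lemma path_image_radial_segment:
  assumes "norm u = 1" "1 < p" "1 < q"
  shows "path_image (radial_segment p q u) \<subseteq> - cball 0 1"
proof
  fix z assume "z \<in> path_image (radial_segment p q u)"
  then obtain t where t: "0 \<le> t" "t \<le> 1" "z = radial_segment p q u t"
    by (auto simp: path_image_def)
  then show "z \<in> - cball 0 1"
    using norm_radial_segment[OF assms(1) _ _ t(1,2), of p q] convex_comb_between[OF t(1,2), of p q]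
      assms by auto
qed

lemma length_radial_segment_le:
  assumes "norm u = 1"
  shows "weighted_length_le (\<lambda>z. 1) (radial_segment p q u) \<bar>q - p\<bar>"
proof (rule weighted_length_le_lipschitz)
  fix a b :: real assume "0 \<le> a" "a \<le> b" "b \<le> 1"
  have "radial_segment p q u b - radial_segment p q u a = ((b - a) * (q - p)) *\<^sub>R u"
    by (simp add: radial_segment_def algebra_simps)
  then show "dist (radial_segment p q u b) (radial_segment p q u a) \<le> \<bar>q - p\<bar> * (b - a)"
    using assms \<open>a \<le> b\<close> by (simp add: dist_norm abs_mult)
qed

text \<open>The majorant is |log d(g t) - log d(g 0)|: along the segment d changes exactly by the
  chord length, and (q - p)/q \<le> log q - log p.\<close>

lemma qh_length_radial_segment_le:
  assumes u: "norm u = 1" and pq: "1 < p" "1 < q"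
  shows "weighted_length_le (\<lambda>z. 1 / bdist (- cball 0 1) z) (radial_segment p q u)
           \<bar>ln (q - 1) - ln (p - 1)\<bar>"
proof -
  let ?r = "\<lambda>t. p + t * (q - p)"
  define F where "F t = \<bar>ln (?r t - 1) - ln (p - 1)\<bar>" for t
  have r: "min p q \<le> ?r t" "?r t \<le> max p q" if "0 \<le> t" "t \<le> 1" for t
    using convex_comb_between[OF that] by auto
  have bd: "bdist (- cball 0 1) (radial_segment p q u t) = ?r t - 1" if "0 \<le> t" "t \<le> 1" for t
  proof -
    have "norm (radial_segment p q u t) = ?r t" using norm_radial_segment[OF u _ _ that] pq by simp
    then show ?thesis using bdist_exterior_ball[of "radial_segment p q u t"] r[OF that] pq by simp
  qed
  have "length_majorant (\<lambda>z. 1 / bdist (- cball 0 1) z) (radial_segment p q u) F"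
    unfolding length_majorant_def
  proof (intro allI impI)
    fix a b :: real assume ab: "0 \<le> a" "a \<le> b" "b \<le> 1"
    have ra: "1 < ?r a" and rb: "1 < ?r b" using r[of a] r[of b] ab pq by auto
    have dist: "dist (radial_segment p q u b) (radial_segment p q u a) = \<bar>?r b - ?r a\<bar>"
      using u by (simp add: radial_segment_def dist_norm scaleR_diff_left[symmetric])
    show "weighted_chord (\<lambda>z. 1 / bdist (- cball 0 1) z) (radial_segment p q u) a b \<le> F b - F a"
    proof (cases "p \<le> q")
      case True
      have mono: "?r a \<le> ?r b" using True ab by (simp add: mult_right_mono)
      have "weighted_chord (\<lambda>z. 1 / bdist (- cball 0 1) z) (radial_segment p q u) a b
          \<le> \<bar>?r b - ?r a\<bar> * (1 / bdist (- cball 0 1) (radial_segment p q u b))"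
        unfolding weighted_chord_def dist
        by (intro mult_left_mono INF_weight_le inverse_bdist_nonneg) (use ab in auto)
      also have "\<dots> = ((?r b - 1) - (?r a - 1)) / (?r b - 1)" using bd[of b] ab mono by simp
      also have "\<dots> \<le> ln (?r b - 1) - ln (?r a - 1)" by (rule ln_diff_ge_div) (use ra mono in auto)
      also have "\<dots> = F b - F a"
      proof -
        have "p \<le> ?r a" "p \<le> ?r b" using r[of a] r[of b] ab True by auto
        then have "ln (p - 1) \<le> ln (?r a - 1)" "ln (p - 1) \<le> ln (?r b - 1)"
          using pq by auto
        then show ?thesis by (simp add: F_def)
      qed
      finally show ?thesis .
    next
      case False
      have mono: "?r b \<le> ?r a" using False ab by (simp add: mult_right_mono_neg)
      have "weighted_chord (\<lambda>z. 1 / bdist (- cball 0 1) z) (radial_segment p q u) a b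
          \<le> \<bar>?r b - ?r a\<bar> * (1 / bdist (- cball 0 1) (radial_segment p q u a))"
        unfolding weighted_chord_def dist
        by (intro mult_left_mono INF_weight_le inverse_bdist_nonneg) (use ab in auto)
      also have "\<dots> = ((?r a - 1) - (?r b - 1)) / (?r a - 1)" using bd[of a] ab mono by simp
      also have "\<dots> \<le> ln (?r a - 1) - ln (?r b - 1)" by (rule ln_diff_ge_div) (use rb mono in auto)
      also have "\<dots> = F b - F a"
      proof -
        have "?r a \<le> p" "?r b \<le> p" using r[of a] r[of b] ab False by auto
        then have "ln (?r a - 1) \<le> ln (p - 1)" "ln (?r b - 1) \<le> ln (p - 1)"
          using ra rb by auto
        then show ?thesis by (simp add: F_def)
      qed
      finally show ?thesis .
    qed
  qed
  moreover have "F 1 - F 0 = \<bar>ln (q - 1) - ln (p - 1)\<bar>" by (simp add: F_def)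
  ultimately show ?thesis unfolding weighted_length_le_def by blast
qed

lemma norm_orthonormal_comb_sq:
  fixes u w :: "'a::euclidean_space"
  assumes "norm u = 1" "norm w = 1" "inner u w = 0"
  shows "(norm (x *\<^sub>R u + y *\<^sub>R w))\<^sup>2 = x\<^sup>2 + y\<^sup>2"
proof -
  have uu: "inner u u = 1" "inner w w = 1" "inner w u = 0"
    using assms by (simp_all add: power2_norm_eq_inner[symmetric] inner_commute)
  have "(norm (x *\<^sub>R u + y *\<^sub>R w))\<^sup>2 = inner (x *\<^sub>R u + y *\<^sub>R w) (x *\<^sub>R u + y *\<^sub>R w)"
    by (simp add: power2_norm_eq_inner)
  also have "\<dots> = x * x * inner u u + x * y * inner u w + y * x * inner w u + y * y * inner w w"
    by (simp add: inner_add_left inner_add_right algebra_simps)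
  finally show ?thesis using uu assms(3) by (simp add: power2_eq_square)
qed

lemma norm_circle_arc:
  fixes u w :: "'a::euclidean_space"
  assumes "norm u = 1" "norm w = 1" "inner u w = 0" "0 \<le> R"
  shows "norm (circle_arc R \<theta> u w t) = R"
proof -
  have "(norm (cos (t * \<theta>) *\<^sub>R u + sin (t * \<theta>) *\<^sub>R w))\<^sup>2 = 1"
    using norm_orthonormal_comb_sq[OF assms(1-3)] by simp
  then have "norm (cos (t * \<theta>) *\<^sub>R u + sin (t * \<theta>) *\<^sub>R w) = 1"
    using norm_ge_zero[of "cos (t * \<theta>) *\<^sub>R u + sin (t * \<theta>) *\<^sub>R w"] by (simp add: power2_eq_1_iff)
  then show ?thesis using assms(4) by (simp add: circle_arc_def)
qed

lemma path_image_circle_arc: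
  fixes u w :: "'a::euclidean_space"
  assumes "norm u = 1" "norm w = 1" "inner u w = 0" "1 < R"
  shows "path_image (circle_arc R \<theta> u w) \<subseteq> - cball 0 1"
  using norm_circle_arc[OF assms(1-3), of R] assms(4) by (auto simp: path_image_def)

lemma chord_le_arc:
  fixes A B :: real
  shows "(cos B - cos A)\<^sup>2 + (sin B - sin A)\<^sup>2 \<le> (B - A)\<^sup>2"
proof -
  have "(cos B - cos A)\<^sup>2 + (sin B - sin A)\<^sup>2 = 2 - 2 * cos (B - A)"
    by (simp add: cos_diff power2_eq_square algebra_simps)
  also have "cos (B - A) = 1 - 2 * (sin ((B - A)/2))\<^sup>2"
    using cos_double_sin[of "(B - A)/2"] by (simp only: times_divide_eq_right nonzero_mult_div_cancel_left zero_neq_numeral)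
  also have "2 - 2 * (1 - 2 * (sin ((B - A)/2))\<^sup>2) = 4 * (sin ((B - A)/2))\<^sup>2" by simp
  also have "\<dots> \<le> 4 * ((B - A)/2)\<^sup>2"
    using abs_sin_x_le_abs_x[of "(B - A)/2"] abs_le_square_iff[of "sin ((B - A)/2)" "(B - A)/2"]
    by linarith
  also have "\<dots> = (B - A)\<^sup>2" by (simp add: power2_eq_square)
  finally show ?thesis .
qed

lemma dist_circle_arc_le:
  fixes u w :: "'a::euclidean_space"
  assumes "norm u = 1" "norm w = 1" "inner u w = 0" "0 \<le> R" "0 \<le> \<theta>" "a \<le> b"
  shows "dist (circle_arc R \<theta> u w b) (circle_arc R \<theta> u w a) \<le> R * \<theta> * (b - a)"
proof -
  let ?v = "(cos (b * \<theta>) - cos (a * \<theta>)) *\<^sub>R u + (sin (b * \<theta>) - sin (a * \<theta>)) *\<^sub>R w"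
  have eq: "circle_arc R \<theta> u w b - circle_arc R \<theta> u w a = R *\<^sub>R ?v"
    by (simp add: circle_arc_def algebra_simps scaleR_diff_left)
  have "(norm ?v)\<^sup>2 \<le> (b * \<theta> - a * \<theta>)\<^sup>2"
    using norm_orthonormal_comb_sq[OF assms(1-3)] chord_le_arc[of "b * \<theta>" "a * \<theta>"] by simp
  then have "norm ?v \<le> \<bar>b * \<theta> - a * \<theta>\<bar>" using power2_le_imp_le[of _ "\<bar>b * \<theta> - a * \<theta>\<bar>"] by simp
  also have "\<bar>b * \<theta> - a * \<theta>\<bar> = \<theta> * (b - a)"
    using assms(5,6) mult_right_mono[OF assms(6,5)] by (simp add: algebra_simps)
  finally show ?thesis
    unfolding dist_norm eq using assms(4) by (simp add: mult_left_mono mult.assoc)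
qed

lemma length_circle_arc_le:
  fixes u w :: "'a::euclidean_space"
  assumes "norm u = 1" "norm w = 1" "inner u w = 0" "0 \<le> R" "0 \<le> \<theta>"
  shows "weighted_length_le (\<lambda>z. 1) (circle_arc R \<theta> u w) (R * \<theta>)"
  by (rule weighted_length_le_lipschitz) (rule dist_circle_arc_le[OF assms])

lemma abs_inner_unit_le_1:
  fixes u v :: "'a::real_inner"
  assumes "norm u = 1" "norm v = 1"
  shows "\<bar>inner u v\<bar> \<le> 1"
  using Cauchy_Schwarz_ineq2[of u v] assms by simp

lemma qh_length_circle_arc_le:
  fixes u w :: "'a::euclidean_space"
  assumes o: "norm u = 1" "norm w = 1" "inner u w = 0" and R: "1 < R" and \<theta>: "0 \<le> \<theta>"
  shows "weighted_length_le (\<lambda>z. 1 / bdist (- cball 0 1) z) (circle_arc R \<theta> u w) (R * \<theta> / (R - 1))"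
proof -
  have bd: "bdist (- cball 0 1) (circle_arc R \<theta> u w t) = R - 1" for t
    using norm_circle_arc[OF o] R by (subst bdist_exterior_ball) auto
  have "length_majorant (\<lambda>z. 1 / bdist (- cball 0 1) z) (circle_arc R \<theta> u w) (\<lambda>t. R * \<theta> / (R - 1) * t)"
    unfolding length_majorant_def
  proof (intro allI impI)
    fix a b :: real assume ab: "0 \<le> a" "a \<le> b" "b \<le> 1"
    have "weighted_chord (\<lambda>z. 1 / bdist (- cball 0 1) z) (circle_arc R \<theta> u w) a b
        \<le> dist (circle_arc R \<theta> u w b) (circle_arc R \<theta> u w a) * (1 / (R - 1))"
      unfolding weighted_chord_def
      using INF_weight_le[OF inverse_bdist_nonneg, of a a b] ab bd by (intro mult_left_mono) auto
    also have "\<dots> \<le> R * \<theta> * (b - a) * (1 / (R - 1))"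
      by (rule mult_right_mono[OF dist_circle_arc_le[OF o]]) (use R \<theta> ab in auto)
    finally show "weighted_chord (\<lambda>z. 1 / bdist (- cball 0 1) z) (circle_arc R \<theta> u w) a b
        \<le> R * \<theta> / (R - 1) * b - R * \<theta> / (R - 1) * a"
      by (simp add: algebra_simps)
  qed
  then show ?thesis
    unfolding weighted_length_le_def by (intro exI[of _ "\<lambda>t. R * \<theta> / (R - 1) * t"]) simp
qed

text \<open>In dimension at least 2 any two unit vectors lie on a common great circle; when they are
  antipodal the second basis vector of the plane has to be chosen separately.\<close>

lemma unit_vector_great_circle:
  fixes u v :: "'a::euclidean_space"
  assumes "DIM('a) \<ge> 2" and u: "norm u = 1" and v: "norm v = 1"
  obtains w where "norm w = 1" "inner u w = 0"
    "v = cos (arccos (inner u v)) *\<^sub>R u + sin (arccos (inner u v)) *\<^sub>R w"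
proof -
  define c where "c = inner u v"
  have cb: "\<bar>c\<bar> \<le> 1" using abs_inner_unit_le_1[OF u v] by (simp add: c_def)
  have cs: "cos (arccos c) = c" "sin (arccos c) = sqrt (1 - c\<^sup>2)"
    using cb by (simp_all add: cos_arccos_abs sin_arccos_abs)
  define v' where "v' = v - c *\<^sub>R u"
  have uu: "inner u u = 1" "inner v v = 1" using u v by (simp_all add: power2_norm_eq_inner[symmetric])
  have uv': "inner u v' = 0" by (simp add: v'_def inner_diff_right c_def uu)
  have "(norm v')\<^sup>2 = inner v' v'" by (simp add: power2_norm_eq_inner)
  also have "\<dots> = 1 - c\<^sup>2"
    by (simp add: v'_def inner_diff_left inner_diff_right uu inner_commute c_def power2_eq_square)
  finally have "(norm v')\<^sup>2 = 1 - c\<^sup>2" .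
  then have nv': "norm v' = sqrt (1 - c\<^sup>2)" by (simp add: real_sqrt_unique)
  show ?thesis
  proof (cases "c\<^sup>2 < 1")
    case True
    define w where "w = (1 / sqrt (1 - c\<^sup>2)) *\<^sub>R v'"
    have "norm w = 1" "inner u w = 0" "v = c *\<^sub>R u + sqrt (1 - c\<^sup>2) *\<^sub>R w"
      using True nv' uv' by (simp_all add: w_def v'_def)
    then show ?thesis using that cs unfolding c_def by metis
  next
    case False
    then have c2: "c\<^sup>2 = 1" using cb abs_le_square_iff[of c 1] by simp
    obtain y :: 'a where y: "y \<noteq> 0" "orthogonal u y" using orthogonal_to_vector_exists[OF assms(1)] by blast
    have "norm (sgn y) = 1" "inner u (sgn y) = 0" "v = c *\<^sub>R u + sqrt (1 - c\<^sup>2) *\<^sub>R sgn y"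
      using y c2 nv' by (simp_all add: norm_sgn orthogonal_def sgn_div_norm v'_def)
    then show ?thesis using that cs unfolding c_def by metis
  qed
qed

text \<open>Bound on the quasihyperbolic length of the path running radially from distance a to distance r from
  the unit sphere, along a great circle through the angle \<theta>, and radially to distance b.\<close>

definition detour_bound :: "real \<Rightarrow> real \<Rightarrow> real \<Rightarrow> real \<Rightarrow> real" where
  "detour_bound a b \<theta> r = \<bar>ln r - ln a\<bar> + (r + 1) * \<theta> / r + \<bar>ln b - ln r\<bar>"

lemma qh_dist_exterior_le_detour_bound:
  fixes x y :: "'a::euclidean_space"
  assumes "DIM('a) \<ge> 2" and x: "1 < norm x" and y: "1 < norm y" and r: "0 < r"
  shows "qh_dist (- cball 0 1) x y
           \<le> ereal (detour_bound (norm x - 1) (norm y - 1) (arccos (inner (sgn x) (sgn y))) r)"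
proof -
  define \<rho> where "\<rho> = r + 1"
  have \<rho>: "1 < \<rho>" using r by (simp add: \<rho>_def)
  define u where "u = sgn x"
  define v where "v = sgn y"
  define \<theta> where "\<theta> = arccos (inner u v)"
  have u: "norm u = 1" and v: "norm v = 1" using x y by (auto simp: u_def v_def norm_sgn)
  obtain w where w: "norm w = 1" "inner u w = 0" "v = cos \<theta> *\<^sub>R u + sin \<theta> *\<^sub>R w"
    using unit_vector_great_circle[OF assms(1) u v] unfolding \<theta>_def by blast
  have \<theta>0: "0 \<le> \<theta>"
    using abs_inner_unit_le_1[OF u v] by (simp add: \<theta>_def arccos_lbound)
  define g1 where "g1 = radial_segment (norm x) \<rho> u"
  define g2 where "g2 = circle_arc \<rho> \<theta> u w"
  define g3 where "g3 = radial_segment \<rho> (norm y) v"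
  define g where "g = g1 +++ (g2 +++ g3)"
  have e12: "g1 1 = g2 0" by (simp add: g1_def g2_def radial_segment_def circle_arc_def)
  have e23: "g2 1 = g3 0" using w(3) by (simp add: g2_def g3_def radial_segment_def circle_arc_def)
  have e123: "g1 1 = (g2 +++ g3) 0" using e12 by (simp add: joinpaths_def)
  have "norm x \<noteq> 0" "norm y \<noteq> 0" using x y by auto
  then have ends: "pathstart g = x" "pathfinish g = y"
    by (simp_all add: g_def g1_def g3_def u_def v_def radial_segment_def sgn_div_norm
        pathstart_def pathfinish_def joinpaths_def right_inverse)
  have path: "path g"
    using e12 e23 unfolding g_def
    by (intro path_join_imp) (simp_all add: g1_def g2_def g3_def path_radial_segment path_circle_arc
        pathstart_def pathfinish_def joinpaths_def)
  have image: "path_image g \<subseteq> - cball 0 1"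
    using path_image_join_subset[of g1 "g2 +++ g3"] path_image_join_subset[of g2 g3]
      path_image_radial_segment[OF u x \<rho>] path_image_circle_arc[OF u w(1,2) \<rho>, of \<theta>]
      path_image_radial_segment[OF v \<rho> y]
    unfolding g_def g1_def g2_def g3_def by blast
  have "weighted_length_le (\<lambda>z. 1) g (\<bar>\<rho> - norm x\<bar> + (\<rho> * \<theta> + \<bar>norm y - \<rho>\<bar>))"
    unfolding g_def g1_def g2_def g3_def using e12 e23 \<rho> \<theta>0
    by (intro weighted_length_le_join length_radial_segment_le length_circle_arc_le u v w(1,2))
       (auto simp: g1_def g2_def g3_def joinpaths_def)
  then have "rectifiable_curve g"
    using path curve_length_le le_less_trans by (fastforce simp: rectifiable_curve_def)
  with image ends have "qh_dist (- cball 0 1) x y \<le> qh_length (- cball 0 1) g"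
    unfolding qh_dist_def by (intro INF_lower) auto
  also have "\<dots> \<le> ereal (\<bar>ln (\<rho> - 1) - ln (norm x - 1)\<bar>
      + (\<rho> * \<theta> / (\<rho> - 1) + \<bar>ln (norm y - 1) - ln (\<rho> - 1)\<bar>))"
    unfolding g_def g1_def g2_def g3_def using e12 e23 \<rho> \<theta>0 x y
    by (intro qh_length_le weighted_length_le_join qh_length_radial_segment_le
        qh_length_circle_arc_le inverse_bdist_nonneg u v w(1,2))
       (auto simp: g1_def g2_def g3_def joinpaths_def)
  finally show ?thesis by (simp add: detour_bound_def \<theta>_def u_def v_def \<rho>_def add.assoc)
qed

subsection \<open>The upper bound\<close>

lemma mult_cos_le_sin:
  fixes y :: real
  assumes "0 \<le> y" "y < pi/2"
  shows "y * cos y \<le> sin y"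
proof -
  have c0: "0 < cos y" using assms by (intro cos_gt_zero_pi) auto
  have "y \<le> tan y" using abs_tan_ge[of y] assms c0 sin_ge_zero[of y] by (simp add: tan_def)
  then show ?thesis using c0 by (simp add: tan_def field_simps)
qed

lemma le_two_sin:
  fixes y :: real
  assumes "0 \<le> y" "y \<le> pi/2"
  shows "y \<le> 2 * sin y"
proof (cases "y \<le> pi/3")
  case True
  have "y * cos y \<le> sin y" using assms True pi_gt_zero by (intro mult_cos_le_sin; linarith)
  moreover have "1/2 \<le> cos y"
    using cos_mono_le_eq[of "pi/3" y] True assms cos_60 by simp
  ultimately have "y * (1/2) \<le> sin y"
    using assms by (meson mult_left_mono order_trans)
  then show ?thesis by simp
next
  case False
  have "sin (pi/3) \<le> sin y"
    using sin_mono_le_eq[of "pi/3" y] False assms by simp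
  then have s: "sqrt 3 / 2 \<le> sin y" using sin_60 by simp
  have "(1.6::real)\<^sup>2 \<le> 3" by (simp add: power2_eq_square)
  then have "1.6 \<le> sqrt 3" by (rule real_le_rsqrt)
  moreover have "pi \<le> 3.2" using pi_approx by simp
  ultimately show ?thesis using s assms by linarith
qed

lemma arccos_inner_le_norm_diff:
  fixes u v :: "'a::euclidean_space"
  assumes u: "norm u = 1" and v: "norm v = 1"
  shows "arccos (inner u v) \<le> 2 * norm (u - v)"
proof -
  define \<theta> where "\<theta> = arccos (inner u v)"
  have cb: "\<bar>inner u v\<bar> \<le> 1" using abs_inner_unit_le_1[OF u v] .
  have \<theta>: "0 \<le> \<theta>" "\<theta> \<le> pi" using arccos_bounded[of "inner u v"] cb by (auto simp: \<theta>_def)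
  have uu: "inner u u = 1" "inner v v = 1" using u v by (simp_all add: power2_norm_eq_inner[symmetric])
  have "(norm (u - v))\<^sup>2 = inner (u - v) (u - v)" by (simp add: power2_norm_eq_inner)
  also have "\<dots> = 2 - 2 * cos \<theta>"
    using cb by (simp add: inner_diff_left inner_diff_right uu inner_commute \<theta>_def cos_arccos_abs)
  also have "cos \<theta> = 1 - 2 * (sin (\<theta>/2))\<^sup>2"
    using cos_double_sin[of "\<theta>/2"] by simp
  finally have "(norm (u - v))\<^sup>2 = (2 * sin (\<theta>/2))\<^sup>2" by (simp add: power2_eq_square)
  moreover have "0 \<le> sin (\<theta>/2)" using \<theta> by (intro sin_ge_zero) auto
  ultimately have "norm (u - v) = 2 * sin (\<theta>/2)"
    using power2_eq_iff_nonneg[of "norm (u - v)" "2 * sin (\<theta>/2)"] by simp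
  moreover have "\<theta>/2 \<le> 2 * sin (\<theta>/2)" using \<theta> by (intro le_two_sin) auto
  ultimately show ?thesis unfolding \<theta>_def by linarith
qed

lemma min_norm_mult_dist_sgn_le:
  fixes a b :: "'a::euclidean_space"
  assumes "a \<noteq> 0" "b \<noteq> 0"
  shows "min (norm a) (norm b) * norm (sgn a - sgn b) \<le> dist a b"
proof -
  have na: "norm a > 0" "norm b > 0" using assms by auto
  have "inner (sgn a) (sgn b) = inner a b / (norm a * norm b)"
    by (simp add: sgn_div_norm field_simps)
  moreover have "inner (sgn a) (sgn a) = 1" "inner (sgn b) (sgn b) = 1"
    using assms by (simp_all add: power2_norm_eq_inner[symmetric] norm_sgn)
  ultimately have "(norm (sgn a - sgn b))\<^sup>2 = 2 - 2 * (inner a b / (norm a * norm b))"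
    by (simp add: power2_norm_eq_inner inner_diff_left inner_diff_right inner_commute)
  then have e1: "norm a * norm b * (norm (sgn a - sgn b))\<^sup>2 = 2 * norm a * norm b - 2 * inner a b"
    using na by (simp add: field_simps)
  have e2: "(dist a b)\<^sup>2 = (norm a)\<^sup>2 + (norm b)\<^sup>2 - 2 * inner a b"
    by (simp add: dist_norm power2_norm_eq_inner inner_diff_left inner_diff_right inner_commute)
  have "(min (norm a) (norm b))\<^sup>2 \<le> norm a * norm b"
    by (simp add: min_def power2_eq_square mult_left_mono mult_right_mono)
  then have "(min (norm a) (norm b) * norm (sgn a - sgn b))\<^sup>2
      \<le> norm a * norm b * (norm (sgn a - sgn b))\<^sup>2"
    by (simp add: power_mult_distrib mult_right_mono)
  also have "\<dots> \<le> (dist a b)\<^sup>2"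
    using e1 e2 sum_squares_bound[of "norm a" "norm b"] by (simp add: mult.assoc)
  finally show ?thesis by (rule power2_le_imp_le) simp
qed

lemma ln3_le: "ln (3::real) \<le> 3/2"
proof -
  have "1 + 3/2 + (3/2)\<^sup>2/2 \<le> exp (3/2::real)" by (rule exp_lower_Taylor_quadratic) simp
  then have "3 \<le> exp (3/2::real)" by (simp add: power2_eq_square)
  then show ?thesis by (metis exp_gt_zero ln_exp ln_le_cancel_iff zero_less_numeral)
qed

lemma eight_le_uniformity_bound: "8 \<le> 4 * pi / ln (3::real)"
proof -
  have "8 * ln (3::real) \<le> 4 * pi" using ln3_le pi_gt3 by simp
  then show ?thesis by (simp add: field_simps)
qed

lemma ln_one_plus_ge: "0 \<le> t \<Longrightarrow> t / (1 + t) \<le> ln (1 + (t::real))"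
  using ln_diff_ge_div[of 1 "1 + t"] by simp

lemma detour_bound_near:
  fixes a b d \<theta> :: real
  assumes ab: "0 < a" "0 < b" and d: "\<bar>a - b\<bar> \<le> d"
    and \<theta>: "(min a b + 1) * \<theta> \<le> 2 * d" and t: "d / min a b \<le> 2"
  shows "detour_bound a b \<theta> (min a b) \<le> 4 * pi / ln 3 * ln (1 + d / min a b)"
proof -
  define m where "m = min a b"
  define t where "t = d / m"
  have m0: "0 < m" using ab by (simp add: m_def)
  have t0: "0 \<le> t" using d m0 by (simp add: t_def)
  have "\<bar>ln m - ln a\<bar> + \<bar>ln b - ln m\<bar> = ln (max a b) - ln m"
    using ab by (auto simp: m_def min_def max_def)
  also have "\<dots> \<le> ln (m + d) - ln m"
    using ab d by (auto simp: m_def min_def max_def)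
  also have "\<dots> = ln (1 + t)"
  proof -
    have "1 + t = (m + d) / m" using m0 by (simp add: t_def field_simps)
    then show ?thesis using m0 d by (simp add: ln_div)
  qed
  finally have ln: "\<bar>ln m - ln a\<bar> + \<bar>ln b - ln m\<bar> \<le> ln (1 + t)" .
  have arc: "(m + 1) * \<theta> / m \<le> 2 * t"
    using \<theta> m0 by (simp add: m_def[symmetric] t_def divide_right_mono)
  have "t / 3 \<le> t / (1 + t)" using t t0 by (intro divide_left_mono) (auto simp: t_def m_def)
  then have "2 * t \<le> 7 * ln (1 + t)" using ln_one_plus_ge[OF t0] t0 by linarith
  also have "\<dots> \<le> (4 * pi / ln 3 - 1) * ln (1 + t)"
    using eight_le_uniformity_bound t0 by (intro mult_right_mono) auto
  finally show ?thesis
    using ln arc unfolding detour_bound_def m_def[symmetric] t_def[symmetric] by (simp add: algebra_simps)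
qed

lemma arc_term_far_le:
  fixes M \<mu> d \<theta> :: real
  assumes "0 < \<mu>" "\<mu> \<le> M" "M - \<mu> \<le> d" "0 < d"
    and \<theta>: "0 \<le> \<theta>" "\<theta> \<le> pi" "(\<mu> + 1) * \<theta> \<le> 2 * d"
  shows "(M + d + 1) * \<theta> / (M + d) \<le> 2 * pi"
proof -
  define r where "r = M + d"
  have r: "0 < r" "d \<le> r" using assms by (simp_all add: r_def)
  have "(r + 1) * \<theta> \<le> 2 * pi * r"
  proof (cases "1 \<le> d")
    case True
    have "(r + 1) * \<theta> \<le> (r + 1) * pi" using \<theta> r by (intro mult_left_mono) auto
    also have "\<dots> \<le> (2 * r) * pi" using True r by (intro mult_right_mono) auto
    finally show ?thesis by (simp add: algebra_simps)
  next
    case False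
    have "\<theta> \<le> 2" using \<theta> assms False mult_right_mono[of 1 "\<mu> + 1" \<theta>] by linarith
    have "(r + 1) * \<theta> \<le> (\<mu> + 1 + 2 * d) * \<theta>" using assms by (intro mult_right_mono) (auto simp: r_def)
    also have "\<dots> = (\<mu> + 1) * \<theta> + 2 * d * \<theta>" by (simp add: algebra_simps)
    also have "\<dots> \<le> 2 * d + 2 * d * 2"
      using \<theta> \<open>\<theta> \<le> 2\<close> assms by (intro add_mono mult_left_mono) auto
    also have "\<dots> \<le> 2 * pi * r" using pi_gt3 r mult_right_mono[of 3 pi r] by linarith
    finally show ?thesis .
  qed
  then show ?thesis using r by (simp add: r_def[symmetric] divide_le_eq)
qed

lemma detour_bound_far:
  fixes a b d \<theta> :: real
  assumes ab: "0 < a" "0 < b" and d: "\<bar>a - b\<bar> \<le> d"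
    and \<theta>: "0 \<le> \<theta>" "\<theta> \<le> pi" "(min a b + 1) * \<theta> \<le> 2 * d" and t: "2 < d / min a b"
  shows "detour_bound a b \<theta> (max a b + d) \<le> 4 * pi / ln 3 * ln (1 + d / min a b)"
proof -
  define \<mu> where "\<mu> = min a b"
  define M where "M = max a b"
  define t where "t = d / \<mu>"
  have \<mu>0: "0 < \<mu>" using ab by (simp add: \<mu>_def)
  have d0: "0 < d" using t \<mu>0 by (metis \<mu>_def divide_nonpos_pos not_less order.strict_trans zero_less_numeral)
  have M: "\<mu> \<le> M" "M - \<mu> \<le> d" using d by (auto simp: \<mu>_def M_def min_def max_def)
  have t0: "0 \<le> t" using d0 \<mu>0 by (simp add: t_def)
  have arc: "(M + d + 1) * \<theta> / (M + d) \<le> 2 * pi"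
    by (rule arc_term_far_le[OF \<mu>0 M d0 \<theta>(1,2) \<theta>(3)[folded \<mu>_def]])
  have "\<bar>ln (M + d) - ln a\<bar> + \<bar>ln b - ln (M + d)\<bar> = ln ((M + d) / \<mu>) + ln ((M + d) / M)"
  proof -
    have "ln a \<le> ln (M + d)" "ln b \<le> ln (M + d)" using ab d0 by (auto simp: M_def max_def)
    moreover have "ln a + ln b = ln \<mu> + ln M" by (auto simp: \<mu>_def M_def min_def max_def)
    ultimately show ?thesis using \<mu>0 M d0 by (simp add: ln_div)
  qed
  also have "\<dots> \<le> ln 2 + 2 * ln (1 + t)"
  proof -
    have "(M + d) / \<mu> \<le> 2 * (\<mu> + d) / \<mu>" using M \<mu>0 by (intro divide_right_mono) auto
    also have "\<dots> = 2 * (1 + t)" using \<mu>0 by (simp add: t_def field_simps)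
    finally have "(M + d) / \<mu> \<le> 2 * (1 + t)" .
    then have "ln ((M + d) / \<mu>) \<le> ln (2 * (1 + t))" using \<mu>0 M d0 t0 by simp
    then have "ln ((M + d) / \<mu>) \<le> ln 2 + ln (1 + t)" using ln_mult[of 2 "1 + t"] t0 by simp
    moreover have "(M + d) / M \<le> 1 + t" using M \<mu>0 d0 by (simp add: t_def field_simps mult_left_mono)
    then have "ln ((M + d) / M) \<le> ln (1 + t)" using \<mu>0 M d0 t0 by simp
    ultimately show ?thesis by simp
  qed
  finally have ln: "\<bar>ln (M + d) - ln a\<bar> + \<bar>ln b - ln (M + d)\<bar> \<le> 1 + 2 * ln (1 + t)"
    using ln_le_minus_one[of 2] by simp
  have "(4 * pi / ln 3 - 2) * ln 3 \<le> (4 * pi / ln 3 - 2) * ln (1 + t)"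
    using eight_le_uniformity_bound t by (intro mult_left_mono) (auto simp: t_def \<mu>_def)
  moreover have "(4 * pi / ln 3 - 2) * ln 3 = 4 * pi - 2 * ln (3::real)" by (simp add: field_simps)
  then have "1 + 2 * pi \<le> (4 * pi / ln 3 - 2) * ln 3" using ln3_le pi_gt3 by simp
  ultimately show ?thesis
    using ln arc unfolding detour_bound_def M_def[symmetric] \<mu>_def[symmetric] t_def[symmetric]
    by (simp add: algebra_simps)
qed

lemma qh_dist_exterior_le_j_dist:
  fixes x y :: "'a::euclidean_space"
  assumes "DIM('a) \<ge> 2" and x: "1 < norm x" and y: "1 < norm y"
  shows "qh_dist (- cball 0 1) x y \<le> ereal (4 * pi / ln 3 * j_dist (- cball 0 1) x y)"
proof -
  define a where "a = norm x - 1"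
  define b where "b = norm y - 1"
  define d where "d = dist x y"
  define \<theta> where "\<theta> = arccos (inner (sgn x) (sgn y))"
  have ab: "0 < a" "0 < b" using x y by (auto simp: a_def b_def)
  have j: "j_dist (- cball 0 1) x y = ln (1 + d / min a b)"
    using x y by (simp add: j_dist_def bdist_exterior_ball a_def b_def d_def)
  have d: "\<bar>a - b\<bar> \<le> d" using norm_triangle_ineq3[of x y] by (simp add: a_def b_def d_def dist_norm)
  have su: "norm (sgn x) = 1" "norm (sgn y) = 1" using x y by (auto simp: norm_sgn)
  have \<theta>: "0 \<le> \<theta>" "\<theta> \<le> pi"
    using arccos_bounded[of "inner (sgn x) (sgn y)"] abs_inner_unit_le_1[OF su] by (auto simp: \<theta>_def)
  have "(min a b + 1) * \<theta> = min (norm x) (norm y) * \<theta>" by (simp add: a_def b_def min_def)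
  also have "\<dots> \<le> min (norm x) (norm y) * (2 * norm (sgn x - sgn y))"
    using arccos_inner_le_norm_diff[OF su] by (intro mult_left_mono) (auto simp: \<theta>_def)
  also have "\<dots> \<le> 2 * d"
    using min_norm_mult_dist_sgn_le[of x y] x y by (force simp: d_def)
  finally have \<theta>d: "(min a b + 1) * \<theta> \<le> 2 * d" .
  obtain r where "0 < r" "detour_bound a b \<theta> r \<le> 4 * pi / ln 3 * ln (1 + d / min a b)"
  proof (cases "d / min a b \<le> 2")
    case True
    then show ?thesis using that[of "min a b"] detour_bound_near[OF ab d \<theta>d] ab by simp
  next
    case False
    then show ?thesis using that[of "max a b + d"] detour_bound_far[OF ab d \<theta> \<theta>d] ab d by simp
  qed
  then show ?thesis
    using qh_dist_exterior_le_detour_bound[OF assms] j order_trans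
    by (fastforce simp: a_def b_def \<theta>_def)
qed

subsection \<open>The lower bound\<close>

lemma angle_diff_le_norm_diff:
  fixes p q e :: "'a::euclidean_space"
  assumes p: "norm p = 1" and q: "norm q = 1" and e: "norm e = 1"
  shows "2 * sin (\<bar>arccos (inner p e) - arccos (inner q e)\<bar> / 2) \<le> norm (p - q)"
proof -
  define \<alpha> where "\<alpha> = arccos (inner p e)"
  define \<beta> where "\<beta> = arccos (inner q e)"
  have pe: "\<bar>inner p e\<bar> \<le> 1" "\<bar>inner q e\<bar> \<le> 1" using abs_inner_unit_le_1 p q e by auto
  have uu: "inner p p = 1" "inner q q = 1" "inner e e = 1"
    using p q e by (simp_all add: power2_norm_eq_inner[symmetric])
  define p' where "p' = p - inner p e *\<^sub>R e"
  define q' where "q' = q - inner q e *\<^sub>R e"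
  have "(norm p')\<^sup>2 = inner p' p'" "(norm q')\<^sup>2 = inner q' q'" by (simp_all add: power2_norm_eq_inner)
  then have "(norm p')\<^sup>2 = 1 - (inner p e)\<^sup>2" "(norm q')\<^sup>2 = 1 - (inner q e)\<^sup>2"
    by (simp_all add: p'_def q'_def inner_diff_left inner_diff_right uu inner_commute power2_eq_square)
  then have "norm p' = sin \<alpha>" "norm q' = sin \<beta>"
    using pe by (simp_all add: \<alpha>_def \<beta>_def sin_arccos_abs real_sqrt_unique)
  moreover have "inner p q = inner p e * inner q e + inner p' q'"
    by (simp add: p'_def q'_def inner_diff_left inner_diff_right uu inner_commute)
  moreover have "cos \<alpha> = inner p e" "cos \<beta> = inner q e"
    using pe by (simp_all add: \<alpha>_def \<beta>_def cos_arccos_abs)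
  ultimately have "inner p q \<le> cos (\<alpha> - \<beta>)"
    using norm_cauchy_schwarz[of p' q'] by (simp add: cos_diff)
  define z where "z = \<bar>\<alpha> - \<beta>\<bar>"
  have "cos (\<alpha> - \<beta>) = cos z" using cos_minus[of "\<beta> - \<alpha>"] by (auto simp: z_def abs_if)
  also have "cos z = 1 - 2 * (sin (z/2))\<^sup>2" using cos_double_sin[of "z/2"] by simp
  moreover have "(norm (p - q))\<^sup>2 = 2 - 2 * inner p q"
    by (simp add: power2_norm_eq_inner inner_diff_left inner_diff_right uu inner_commute)
  ultimately have "(2 * sin (z/2))\<^sup>2 \<le> (norm (p - q))\<^sup>2"
    using \<open>inner p q \<le> cos (\<alpha> - \<beta>)\<close> by (simp add: power2_eq_square)
  then have "2 * sin (z/2) \<le> norm (p - q)" by (rule power2_le_imp_le) simp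
  then show ?thesis by (simp add: z_def \<alpha>_def \<beta>_def)
qed

lemma one_minus_three_le_ratio_mult_cos:
  fixes \<eta> :: real
  assumes "0 < \<eta>" "\<eta> \<le> 1/3"
  shows "1 - 3 * \<eta> \<le> (1 - \<eta>) / (1 + \<eta>) * cos \<eta>"
proof -
  have "(sin (\<eta>/2))\<^sup>2 \<le> (\<eta>/2)\<^sup>2"
    using abs_sin_x_le_abs_x[of "\<eta>/2"] abs_le_square_iff[of "sin (\<eta>/2)" "\<eta>/2"] by linarith
  moreover have "\<eta> * \<eta> \<le> 2 * \<eta>" using assms mult_right_mono[of \<eta> 2 \<eta>] by simp
  moreover have "cos \<eta> = 1 - 2 * (sin (\<eta>/2))\<^sup>2" using cos_double_sin[of "\<eta>/2"] by simp
  ultimately have "1 - \<eta> \<le> cos \<eta>" by (simp add: power2_eq_square)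
  moreover have "1 - 2 * \<eta> \<le> (1 - \<eta>) / (1 + \<eta>)" using assms by (simp add: field_simps)
  ultimately have "(1 - 2 * \<eta>) * (1 - \<eta>) \<le> (1 - \<eta>) / (1 + \<eta>) * cos \<eta>"
    using assms by (intro mult_mono) auto
  moreover have "1 - 3 * \<eta> \<le> (1 - 2 * \<eta>) * (1 - \<eta>)" using assms by (simp add: algebra_simps)
  ultimately show ?thesis by linarith
qed

text \<open>With r = |g a|, the chord is at least (r - \<eta>) \<cdot> (angle) \<cdot> cos \<eta> and the weight at
  least 1/(r + \<eta>); since r > 1 the product is at least (1 - 3\<eta>) \<cdot> (angle).\<close>

lemma weighted_chord_ge_angle_diff:
  fixes g :: "real \<Rightarrow> 'a::euclidean_space"
  assumes e: "norm e = 1" and ab: "a \<le> b" and \<eta>: "0 < \<eta>" "\<eta> \<le> 1/3"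
    and outside: "\<And>s. s \<in> {a..b} \<Longrightarrow> 1 < norm (g s)"
    and near: "\<And>s. s \<in> {a..b} \<Longrightarrow> norm (g s) < norm (g a) + \<eta>"
    and nb: "norm (g a) - \<eta> < norm (g b)"
    and angle: "\<bar>arccos (inner (sgn (g b)) e) - arccos (inner (sgn (g a)) e)\<bar> < \<eta>"
  shows "(1 - 3 * \<eta>) * \<bar>arccos (inner (sgn (g b)) e) - arccos (inner (sgn (g a)) e)\<bar>
     \<le> weighted_chord (\<lambda>z. 1 / bdist (- cball 0 1) z) g a b"
proof -
  define z where "z = \<bar>arccos (inner (sgn (g b)) e) - arccos (inner (sgn (g a)) e)\<bar>"
  define ra where "ra = norm (g a)"
  have ra1: "1 < ra" using outside[of a] ab by (simp add: ra_def)
  have z: "0 \<le> z" "z < \<eta>" using angle by (simp_all add: z_def)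
  have g0: "g a \<noteq> 0" "g b \<noteq> 0" using outside[of a] outside[of b] ab by auto
  have ce0: "0 \<le> cos \<eta>" using \<eta> pi_gt3 by (intro cos_ge_zero) auto
  have I: "1 / (ra + \<eta>) \<le> (INF s\<in>{a..b}. 1 / bdist (- cball 0 1) (g s))"
  proof (rule cINF_greatest)
    fix s assume s: "s \<in> {a..b}"
    then show "1 / (ra + \<eta>) \<le> 1 / bdist (- cball 0 1) (g s)"
      using bdist_exterior_ball[of "g s"] outside[OF s] near[OF s]
      by (intro divide_left_mono) (auto simp: ra_def)
  qed (use ab in simp)
  have "z * cos \<eta> \<le> z * cos (z/2)"
    using z \<eta> pi_gt3 by (intro mult_left_mono) (auto simp: cos_mono_le_eq)
  also have "\<dots> \<le> 2 * sin (z/2)" using mult_cos_le_sin[of "z/2"] z \<eta> pi_gt3 by simp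
  also have "\<dots> \<le> norm (sgn (g b) - sgn (g a))"
    unfolding z_def by (rule angle_diff_le_norm_diff) (use g0 e in \<open>simp_all add: norm_sgn\<close>)
  finally have "(ra - \<eta>) * (z * cos \<eta>)
      \<le> min (norm (g b)) (norm (g a)) * norm (sgn (g b) - sgn (g a))"
    using nb near[of a] ab ra1 \<eta> z ce0 by (intro mult_mono) (auto simp: ra_def)
  also have "\<dots> \<le> dist (g b) (g a)" by (rule min_norm_mult_dist_sgn_le[OF g0(2,1)])
  finally have chord: "(ra - \<eta>) * (z * cos \<eta>) \<le> dist (g b) (g a)" .
  have "(1 - 3 * \<eta>) * z \<le> (1 - \<eta>) / (1 + \<eta>) * cos \<eta> * z"
    using one_minus_three_le_ratio_mult_cos[OF \<eta>] z by (intro mult_right_mono) auto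
  also have "\<dots> \<le> (ra - \<eta>) / (ra + \<eta>) * cos \<eta> * z"
    using ra1 \<eta> ce0 z by (intro mult_right_mono) (auto simp: field_simps)
  also have "\<dots> = ((ra - \<eta>) * (z * cos \<eta>)) * (1 / (ra + \<eta>))" by (simp add: field_simps)
  also have "\<dots> \<le> weighted_chord (\<lambda>z. 1 / bdist (- cball 0 1) z) g a b"
    unfolding weighted_chord_def using chord I ra1 \<eta> z ce0 by (intro mult_mono) auto
  finally show ?thesis by (simp add: z_def)
qed

lemma qh_length_ge_of_fine_chords:
  assumes "0 < \<delta>" "0 \<le> c"
    and fine: "\<And>a b. 0 \<le> a \<Longrightarrow> a \<le> b \<Longrightarrow> b \<le> 1 \<Longrightarrow> b - a < \<delta> \<Longrightarrow>
                 c * \<bar>f b - f a\<bar> \<le> weighted_chord (\<lambda>z. 1 / bdist G z) g a b"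
  shows "ereal (c * \<bar>f 1 - f 0\<bar>) \<le> qh_length G g"
proof -
  obtain m where m: "0 < m" "inverse (real m) < \<delta>"
    using reals_Archimedean[OF assms(1)] by (metis of_nat_0_less_iff zero_less_Suc)
  define t where "t i = real i / real m" for i
  have part: "(m, t) \<in> partitions01"
    using m by (auto simp: partitions01_def t_def divide_strict_right_mono)
  have "(\<Sum>i<m. f (t (Suc i)) - f (t i)) = f (t m) - f (t 0)" by (rule sum_lessThan_telescope)
  then have "c * \<bar>f 1 - f 0\<bar> = c * \<bar>\<Sum>i<m. f (t (Suc i)) - f (t i)\<bar>"
    using m by (simp add: t_def)
  also have "\<dots> \<le> (\<Sum>i<m. c * \<bar>f (t (Suc i)) - f (t i)\<bar>)"
    using assms(2) by (simp add: sum_distrib_left[symmetric] mult_left_mono sum_abs)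
  also have "\<dots> \<le> (\<Sum>i<m. weighted_chord (\<lambda>z. 1 / bdist G z) g (t i) (t (Suc i)))"
  proof (rule sum_mono)
    fix i assume "i \<in> {..<m}"
    then show "c * \<bar>f (t (Suc i)) - f (t i)\<bar> \<le> weighted_chord (\<lambda>z. 1 / bdist G z) g (t i) (t (Suc i))"
      using m by (intro fine) (auto simp: t_def field_simps)
  qed
  finally have "ereal (c * \<bar>f 1 - f 0\<bar>)
      \<le> ereal (\<Sum>i<m. weighted_chord (\<lambda>z. 1 / bdist G z) g (t i) (t (Suc i)))" by simp
  also have "\<dots> \<le> qh_length G g"
    unfolding qh_length_def weighted_chord_def by (rule SUP_upper2[OF part]) simp
  finally show ?thesis .
qed

lemma qh_length_exterior_ge_angle_change:
  fixes g :: "real \<Rightarrow> 'a::euclidean_space"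
  assumes g: "path g" "path_image g \<subseteq> - cball 0 1" and e: "norm e = 1"
    and \<eta>: "0 < \<eta>" "\<eta> \<le> 1/3"
  defines "\<phi> \<equiv> \<lambda>t. arccos (inner (sgn (g t)) e)"
  shows "ereal ((1 - 3 * \<eta>) * \<bar>\<phi> 1 - \<phi> 0\<bar>) \<le> qh_length (- cball 0 1) g"
proof -
  have outside: "\<And>s. s \<in> {0..1} \<Longrightarrow> 1 < norm (g s)" using g by (force simp: path_image_def)
  have cg: "continuous_on {0..1} g" using g by (simp add: path_def)
  have inner_bounds: "\<forall>t\<in>{0..1}. - 1 \<le> inner (sgn (g t)) e \<and> inner (sgn (g t)) e \<le> 1"
  proof
    fix t :: real assume "t \<in> {0..1}"
    then have "norm (sgn (g t)) = 1" using outside by (force simp: norm_sgn)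
    from abs_inner_unit_le_1[OF this e]
    show "- 1 \<le> inner (sgn (g t)) e \<and> inner (sgn (g t)) e \<le> 1" by linarith
  qed
  have "\<forall>t\<in>{0..1}. g t \<noteq> 0" using outside by force
  then have "continuous_on {0..1} \<phi>"
    unfolding \<phi>_def by (intro continuous_on_arccos continuous_intros cg inner_bounds)
  from compact_uniformly_continuous[OF this compact_Icc] \<eta>
  obtain \<delta>1 where \<delta>1: "\<delta>1 > 0" "\<And>s s'. s \<in> {0..1} \<Longrightarrow> s' \<in> {0..1} \<Longrightarrow> dist s' s < \<delta>1 \<Longrightarrow>
      dist (\<phi> s') (\<phi> s) < \<eta>"
    unfolding uniformly_continuous_on_def by metis
  have "continuous_on {0..1} (\<lambda>t. norm (g t))" by (intro continuous_intros cg)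
  from compact_uniformly_continuous[OF this compact_Icc] \<eta>
  obtain \<delta>2 where \<delta>2: "\<delta>2 > 0" "\<And>s s'. s \<in> {0..1} \<Longrightarrow> s' \<in> {0..1} \<Longrightarrow> dist s' s < \<delta>2 \<Longrightarrow>
      dist (norm (g s')) (norm (g s)) < \<eta>"
    unfolding uniformly_continuous_on_def by metis
  show ?thesis
  proof (rule qh_length_ge_of_fine_chords)
    show "0 < min \<delta>1 \<delta>2" "0 \<le> 1 - 3 * \<eta>" using \<delta>1 \<delta>2 \<eta> by auto
    fix a b :: real assume ab: "0 \<le> a" "a \<le> b" "b \<le> 1" "b - a < min \<delta>1 \<delta>2"
    have close: "s \<in> {0..1}" "dist s a < \<delta>1" "dist s a < \<delta>2" if "s \<in> {a..b}" for s
      using that ab by (auto simp: dist_real_def)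
    show "(1 - 3 * \<eta>) * \<bar>\<phi> b - \<phi> a\<bar> \<le> weighted_chord (\<lambda>z. 1 / bdist (- cball 0 1) z) g a b"
      unfolding \<phi>_def
    proof (rule weighted_chord_ge_angle_diff[OF e ab(2) \<eta>])
      show "norm (g s) < norm (g a) + \<eta>" if "s \<in> {a..b}" for s
        using \<delta>2(2)[of a s] close[OF that] ab by (simp add: dist_real_def)
      show "norm (g a) - \<eta> < norm (g b)"
        using \<delta>2(2)[of a b] close[of b] ab by (simp add: dist_real_def)
      show "\<bar>arccos (inner (sgn (g b)) e) - arccos (inner (sgn (g a)) e)\<bar> < \<eta>"
        using \<delta>1(2)[of a b] close[of b] ab by (simp add: dist_real_def \<phi>_def)
    qed (use outside ab in auto)
  qed
qed

lemma qh_dist_exterior_antipodal_ge_pi: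
  fixes e :: "'a::euclidean_space"
  assumes e: "norm e = 1" and r: "1 < r"
  shows "ereal pi \<le> qh_dist (- cball 0 1) (r *\<^sub>R e) (- (r *\<^sub>R e))"
  unfolding qh_dist_def
proof (rule INF_greatest)
  fix g assume "g \<in> {\<gamma>. rectifiable_curve \<gamma> \<and> path_image \<gamma> \<subseteq> - cball 0 1 \<and>
      pathstart \<gamma> = r *\<^sub>R e \<and> pathfinish \<gamma> = - (r *\<^sub>R e)}"
  then have g: "path g" "path_image g \<subseteq> - cball 0 1" "g 0 = r *\<^sub>R e" "g 1 = - (r *\<^sub>R e)"
    by (auto simp: rectifiable_curve_def pathstart_def pathfinish_def)
  have "sgn e = e" using e by (simp add: sgn_div_norm)
  then have "sgn (g 0) = e" "sgn (g 1) = - e"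
    using g(3,4) r by (simp_all add: sgn_scaleR sgn_minus)
  then have turn: "\<bar>arccos (inner (sgn (g 1)) e) - arccos (inner (sgn (g 0)) e)\<bar> = pi"
    using e by (simp add: power2_norm_eq_inner[symmetric])
  show "ereal pi \<le> qh_length (- cball 0 1) g"
  proof (rule ereal_le_epsilon2)
    fix \<epsilon> :: real assume "0 < \<epsilon>"
    define \<eta> where "\<eta> = min (1/3) (\<epsilon> / (3 * pi))"
    have \<eta>: "0 < \<eta>" "\<eta> \<le> 1/3" using \<open>0 < \<epsilon>\<close> by (auto simp: \<eta>_def)
    have "3 * pi * \<eta> \<le> 3 * pi * (\<epsilon> / (3 * pi))"
      by (intro mult_left_mono) (auto simp: \<eta>_def)
    then have "pi - \<epsilon> \<le> (1 - 3 * \<eta>) * pi" by (simp add: algebra_simps)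
    then have "ereal (pi - \<epsilon>) \<le> ereal ((1 - 3 * \<eta>) * pi)" by simp
    also have "\<dots> \<le> qh_length (- cball 0 1) g"
      using qh_length_exterior_ge_angle_change[OF g(1,2) e \<eta>] turn by simp
    finally have "ereal (pi - \<epsilon>) \<le> qh_length (- cball 0 1) g" .
    then show "ereal pi \<le> qh_length (- cball 0 1) g + ereal \<epsilon>"
      by (simp add: ereal_minus_le[symmetric])
  qed
qed

lemma j_dist_exterior_antipodal_le:
  fixes e :: "'a::euclidean_space"
  assumes e: "norm e = 1" and r: "1 < r"
  shows "j_dist (- cball 0 1) (r *\<^sub>R e) (- (r *\<^sub>R e)) \<le> ln 3 + 2 / (3 * (r - 1))"
proof -
  have "j_dist (- cball 0 1) (r *\<^sub>R e) (- (r *\<^sub>R e)) = ln (1 + 2 * r / (r - 1))"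
    using e r bdist_exterior_ball[of "r *\<^sub>R e"] bdist_exterior_ball[of "- (r *\<^sub>R e)"]
    by (simp add: j_dist_def dist_norm scaleR_2[symmetric])
  also have "1 + 2 * r / (r - 1) = 3 * (1 + 2 / (3 * (r - 1)))" using r by (simp add: field_simps)
  also have "ln \<dots> = ln 3 + ln (1 + 2 / (3 * (r - 1)))"
    using r by (intro ln_mult_pos) (auto simp: add_pos_nonneg)
  also have "ln (1 + 2 / (3 * (r - 1))) \<le> 2 / (3 * (r - 1))"
    using r by (intro ln_add_one_self_le_self) auto
  finally show ?thesis by simp
qed

lemma uniformity_const_exterior_le:
  assumes "DIM('a::euclidean_space) \<ge> 2"
  shows "uniformity_const (- cball 0 1 :: 'a set) \<le> ereal (4 * pi / ln 3)"
  unfolding uniformity_const_def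
proof (rule Inf_lower, intro imageI CollectI conjI ballI)
  show "1 \<le> 4 * pi / ln (3::real)" using eight_le_uniformity_bound by linarith
  fix x y :: 'a assume "x \<in> - cball 0 1" "y \<in> - cball 0 1"
  then show "qh_dist (- cball 0 1) x y \<le> ereal (4 * pi / ln 3 * j_dist (- cball 0 1) x y)"
    using qh_dist_exterior_le_j_dist[OF assms] by simp
qed

text \<open>Test the defining inequality on the pairs re, -re with r \<rightarrow> \<infinity>.\<close>

lemma uniformity_const_exterior_ge:
  "ereal (pi / ln 3) \<le> uniformity_const (- cball 0 1 :: 'a::euclidean_space set)"
  unfolding uniformity_const_def
proof (rule Inf_greatest, safe)
  fix A :: real
  assume A: "1 \<le> A" "\<forall>x\<in>- cball 0 1. \<forall>y\<in>- cball 0 1.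
    qh_dist (- cball 0 1) x y \<le> ereal (A * j_dist (- cball (0::'a) 1) x y)"
  obtain e :: 'a where "e \<in> Basis" using nonempty_Basis by blast
  then have e: "norm e = 1" by simp
  have "pi \<le> A * ln 3"
  proof (rule ccontr)
    assume "\<not> pi \<le> A * ln 3"
    define gap where "gap = pi - A * ln 3"
    have gap: "0 < gap" using \<open>\<not> pi \<le> A * ln 3\<close> by (simp add: gap_def)
    define r where "r = 2 + A / gap"
    have "0 \<le> A / gap" using gap A(1) by simp
    then have r: "1 < r" by (simp add: r_def)
    have "gap * (r - 1) = gap + A" using gap by (simp add: r_def field_simps)
    then have "A / (r - 1) < gap" using gap r by (simp add: pos_divide_less_eq mult.commute)
    moreover have "A * (2 / (3 * (r - 1))) = (2/3) * (A / (r - 1))" by simp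
    ultimately have "A * (2 / (3 * (r - 1))) < gap" using gap by linarith
    moreover have "pi \<le> A * (ln 3 + 2 / (3 * (r - 1)))"
    proof -
      have "r *\<^sub>R e \<in> - cball 0 1" "- (r *\<^sub>R e) \<in> - cball 0 1" using e r by auto
      then have "ereal pi \<le> ereal (A * j_dist (- cball 0 1) (r *\<^sub>R e) (- (r *\<^sub>R e)))"
        using order_trans[OF qh_dist_exterior_antipodal_ge_pi[OF e r]] A(2) by blast
      then have "pi \<le> A * j_dist (- cball 0 1) (r *\<^sub>R e) (- (r *\<^sub>R e))" by simp
      also have "\<dots> \<le> A * (ln 3 + 2 / (3 * (r - 1)))"
        using j_dist_exterior_antipodal_le[OF e r] A(1) by (intro mult_left_mono) auto
      finally show ?thesis .
    qed
    ultimately show False by (simp add: gap_def distrib_left)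
  qed
  then show "ereal (pi / ln 3) \<le> ereal A" by (simp add: field_simps)
qed

theorem mainTheorem18:
  fixes G :: "'a::euclidean_space set"
  assumes "DIM('a) \<ge> 2"
    and "G = - cball 0 1"
  shows "uniform_domain G \<and>
         ereal (pi / ln 3) \<le> uniformity_const G \<and>
         uniformity_const G \<le> ereal (4 * pi / ln 3)"
proof -
  have upper: "uniformity_const G \<le> ereal (4 * pi / ln 3)"
    using uniformity_const_exterior_le[OF assms(1)] assms(2) by simp
  moreover have "ereal (pi / ln 3) \<le> uniformity_const G"
    using uniformity_const_exterior_ge assms(2) by simp
  moreover have "uniform_domain G"
    unfolding uniform_domain_def using upper by (rule le_less_trans) simp
  ultimately show ?thesis by blast
qed

end
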